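(* Let $m,k\in\mathbb{N}$ and let $\beta\in\mathbb{C}$ with $\beta,\ 2\beta+2m+2k+1\notin\mathbb{Z}_0^-$. Then \[ {}_3F_2\left[\begin{array}{r} -2m,\ 1+2m,\ \beta;\\ -2m-2k,\ 2\beta+2m+2k+1;\end{array}1\right]_{2m}=\frac{(1+2\beta+2k)_{2m}\left(1+k\right)_{2m}}{(1+2k)_{2m}\left(1+\beta+k\right)_{2m}}. \]
   Context: $\mathbb{N}=\{1,2,3,\dots\}$, $\mathbb{Z}_0^-=\{0,-1,-2,\dots\}$. For $a\in\mathbb{C}$ and $n\in\mathbb{N}_0$, $(a)_0=1$ and $(a)_n=a(a+1)\cdots(a+n-1)$. For $N\in\mathbb{N}_0$, ${}_3F_2\left[\begin{array}{r} a_1,a_2,a_3;\\ b_1,b_2;\end{array}z\right]_N=\sum_{n=0}^{N}\frac{(a_1)_n(a_2)_n(a_3)_n}{(b_1)_n(b_2)_n}\frac{z^n}{n!}$ (the sum of the first $N+1$ terms), defined whenever $(b_1)_n(b_2)_n\neq0$ for $0\le n\le N$. *)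

theory Defs
  imports Complex_Main
begin

definition nonpos_ints_c :: "complex set" where
  "nonpos_ints_c = {z. \<exists>n::nat. z = - of_nat n}"

definition hyp3F2_trunc ::
  "complex \<Rightarrow> complex \<Rightarrow> complex \<Rightarrow> complex \<Rightarrow> complex \<Rightarrow> complex \<Rightarrow> nat \<Rightarrow> complex" where
  "hyp3F2_trunc a1 a2 a3 b1 b2 z N =
     (\<Sum>n=0..N. pochhammer a1 n * pochhammer a2 n * pochhammer a3 n
        / (pochhammer b1 n * pochhammer b2 n) * z ^ n / of_nat (fact n))"

end

theory Submission
  imports Defs
begin

(* The sum is the truncated Whipple-type series 3F2(a, 1 - a, c; e, 1 + 2c - e; 1) with a = -2m,
   c = \<beta>, e = -2m - 2k.  Writing S(m, k) for it and R(m, k) for the right-hand side, both satisfy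
   the contiguous relation
     (2k + 1)(\<beta> + 2m + k + 2) X(m + 1, k) = (2\<beta> + 2k + 1)(2m + k + 2) X(m, k + 1),
   and S(0, k) = R(0, k) = 1, so induction on m (with k free) gives S = R.  For S it is proved in WZ style: the corresponding combination of
   the summands equals G(n + 1) - G(n) for an explicit rational multiple G of the summand, and G
   vanishes at both ends of the summation range. *)

lemma add_of_nat_notin_nonpos_ints_c:
  assumes "c \<notin> nonpos_ints_c"
  shows "c + of_nat j \<notin> nonpos_ints_c"
proof
  assume "c + of_nat j \<in> nonpos_ints_c"
  then obtain n where "c + of_nat j = - of_nat n"
    by (auto simp: nonpos_ints_c_def)
  then have "c = - of_nat (n + j)"
    by (simp add: algebra_simps eq_neg_iff_add_eq_0)
  with assms show False
    unfolding nonpos_ints_c_def by blast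
qed

lemma add_of_nat_neq_0_if_notin_nonpos_ints_c:
  "c \<notin> nonpos_ints_c \<Longrightarrow> c + of_nat j \<noteq> 0"
  using add_of_nat_notin_nonpos_ints_c[of c j] by (force simp: nonpos_ints_c_def)

lemma pochhammer_add_2:
  "pochhammer (a :: 'a :: comm_semiring_1) (n + 2) = a * (a + 1) * pochhammer (a + 2) n"
  using pochhammer_product'[of a 2 n] by (simp add: numeral_2_eq_2 pochhammer_Suc add.commute)

lemma pochhammer_add_2':
  "pochhammer (a :: 'a :: comm_semiring_1) (n + 2) = a * pochhammer (a + 1) n * (a + 1 + of_nat n)"
proof -
  have "pochhammer a (Suc (Suc n)) = a * pochhammer (a + 1) (Suc n)"
    by (rule pochhammer_rec)
  then show ?thesis
    by (simp add: numeral_2_eq_2 pochhammer_Suc mult.assoc)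
qed

lemma pochhammer_shift_2:
  "pochhammer (a :: 'a :: comm_semiring_1) n * (a + of_nat n) * (a + of_nat n + 1)
     = a * (a + 1) * pochhammer (a + 2) n"
  using pochhammer_add_2[of a n] by (simp add: numeral_2_eq_2 pochhammer_Suc add_ac)

definition hyp3F2_term :: "'a \<Rightarrow> 'a \<Rightarrow> 'a \<Rightarrow> 'a \<Rightarrow> 'a \<Rightarrow> nat \<Rightarrow> 'a :: field_char_0" where
  "hyp3F2_term a1 a2 a3 b1 b2 n =
     pochhammer a1 n * pochhammer a2 n * pochhammer a3 n / (pochhammer b1 n * pochhammer b2 n) / fact n"

lemma hyp3F2_trunc_1_eq_sum:
  "hyp3F2_trunc a1 a2 a3 b1 b2 1 N = (\<Sum>n\<le>N. hyp3F2_term a1 a2 a3 b1 b2 n)"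
  by (simp add: hyp3F2_trunc_def hyp3F2_term_def atLeast0AtMost)

(* No side conditions: in a field x / (y * z) = x / y / z holds even when y or z is 0. *)
lemma hyp3F2_term_Suc:
  "hyp3F2_term a1 a2 a3 b1 b2 (Suc n) = hyp3F2_term a1 a2 a3 b1 b2 n
     * ((a1 + of_nat n) * (a2 + of_nat n) * (a3 + of_nat n))
     / ((b1 + of_nat n) * (b2 + of_nat n) * (of_nat n + 1))"
  by (simp add: hyp3F2_term_def pochhammer_Suc divide_inverse mult_ac add.commute)

lemma hyp3F2_term_mult_eq:
  assumes "pochhammer a1 n * pochhammer a2 n * u = pochhammer a1' n * pochhammer a2' n * v"
  shows "hyp3F2_term a1 a2 a3 b1 b2 n * u = hyp3F2_term a1' a2' a3 b1 b2 n * v"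
proof -
  have "hyp3F2_term a1 a2 a3 b1 b2 n * u
      = pochhammer a1 n * pochhammer a2 n * u * pochhammer a3 n / (pochhammer b1 n * pochhammer b2 n) / fact n"
    and "hyp3F2_term a1' a2' a3 b1 b2 n * v
      = pochhammer a1' n * pochhammer a2' n * v * pochhammer a3 n / (pochhammer b1 n * pochhammer b2 n) / fact n"
    by (simp_all add: hyp3F2_term_def mult_ac)
  with assms show ?thesis by simp
qed

definition whipple_term :: "complex \<Rightarrow> nat \<Rightarrow> nat \<Rightarrow> nat \<Rightarrow> complex" where
  "whipple_term \<beta> m k = hyp3F2_term (- 2 * of_nat m) (1 + 2 * of_nat m) \<beta>
     (- 2 * of_nat m - 2 * of_nat k) (2 * \<beta> + 2 * of_nat m + 2 * of_nat k + 1)"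

definition whipple_closed_form :: "complex \<Rightarrow> nat \<Rightarrow> nat \<Rightarrow> complex" where
  "whipple_closed_form \<beta> m k =
     pochhammer (1 + 2 * \<beta> + 2 * of_nat k) (2 * m) * pochhammer (1 + of_nat k) (2 * m)
     / (pochhammer (1 + 2 * of_nat k) (2 * m) * pochhammer (1 + \<beta> + of_nat k) (2 * m))"

lemma whipple_term_eq_0: "2 * m < n \<Longrightarrow> whipple_term \<beta> m k n = 0"
  using pochhammer_of_nat_eq_0_lemma[of "2 * m" n, where ?'a = complex]
  by (simp add: whipple_term_def hyp3F2_term_def)

lemma whipple_term_shift_m_k:
  "whipple_term \<beta> m (Suc k) n * ((of_nat n + 2 * of_nat m + 1) * (of_nat n + 2 * of_nat m + 2))
 = whipple_term \<beta> (Suc m) k n * ((of_nat n - 2 * of_nat m - 1) * (of_nat n - 2 * of_nat m - 2))"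
proof -
  define x M where "x = (of_nat n :: complex)" and "M = (of_nat m :: complex)"
  have shift_up: "pochhammer (1 + 2 * M) n * ((x + 2 * M + 1) * (x + 2 * M + 2))
      = (1 + 2 * M) * (2 + 2 * M) * pochhammer (3 + 2 * M) n"
    using pochhammer_shift_2[of "1 + 2 * M" n] unfolding x_def by (simp add: algebra_simps)
  have shift_down: "pochhammer (- 2 * M - 2) n * ((x - 2 * M - 1) * (x - 2 * M - 2))
      = (- 2 * M - 2) * (- 2 * M - 1) * pochhammer (- 2 * M) n"
    using pochhammer_shift_2[of "- 2 * M - 2" n] unfolding x_def by (simp add: algebra_simps)
  have "pochhammer (- 2 * M) n * pochhammer (1 + 2 * M) n * ((x + 2 * M + 1) * (x + 2 * M + 2))
      = pochhammer (- 2 * M - 2) n * pochhammer (3 + 2 * M) n * ((x - 2 * M - 1) * (x - 2 * M - 2))"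
    using shift_up shift_down by algebra
  then have "hyp3F2_term (- 2 * M) (1 + 2 * M) \<beta> b1 b2 n * ((x + 2 * M + 1) * (x + 2 * M + 2))
      = hyp3F2_term (- 2 * M - 2) (3 + 2 * M) \<beta> b1 b2 n * ((x - 2 * M - 1) * (x - 2 * M - 2))"
    for b1 b2 by (rule hyp3F2_term_mult_eq)
  moreover have "whipple_term \<beta> m (Suc k) n = hyp3F2_term (- 2 * M) (1 + 2 * M) \<beta>
      (- 2 * M - 2 * of_nat (Suc k)) (2 * \<beta> + 2 * M + 2 * of_nat (Suc k) + 1) n"
    unfolding whipple_term_def M_def ..
  moreover have "whipple_term \<beta> (Suc m) k n = hyp3F2_term (- 2 * M - 2) (3 + 2 * M) \<beta>
      (- 2 * M - 2 * of_nat (Suc k)) (2 * \<beta> + 2 * M + 2 * of_nat (Suc k) + 1) n"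
  proof -
    have "- 2 * of_nat (Suc m) - 2 * of_nat k = - 2 * M - 2 * of_nat (Suc k)"
      and "2 * \<beta> + 2 * of_nat (Suc m) + 2 * of_nat k + 1 = 2 * \<beta> + 2 * M + 2 * of_nat (Suc k) + 1"
      and "- 2 * of_nat (Suc m) = - 2 * M - 2" and "1 + 2 * of_nat (Suc m) = 3 + 2 * M"
      unfolding M_def by (simp_all add: algebra_simps)
    note lower = this(1,2) and upper = this(3,4)
    show ?thesis
      unfolding whipple_term_def lower unfolding upper ..
  qed
  ultimately show ?thesis
    unfolding x_def M_def by simp
qed

lemma whipple_term_Suc:
  assumes "n \<noteq> 2 * m + 2 * k" and "2 * \<beta> + 2 * of_nat m + 2 * of_nat k + 1 \<notin> nonpos_ints_c"
  shows "whipple_term \<beta> m k (Suc n)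
      * ((of_nat n - 2 * of_nat m - 2 * of_nat k) * (of_nat n + 2 * \<beta> + 2 * of_nat m + 2 * of_nat k + 1) * (of_nat n + 1))
    = whipple_term \<beta> m k n * ((of_nat n - 2 * of_nat m) * (of_nat n + 2 * of_nat m + 1) * (of_nat n + \<beta>))"
proof -
  define x where "x = (of_nat n :: complex)"
  define num den where
    "num = (- 2 * of_nat m + x) * (1 + 2 * of_nat m + x) * (\<beta> + x)" and
    "den = (- 2 * of_nat m - 2 * of_nat k + x) * (2 * \<beta> + 2 * of_nat m + 2 * of_nat k + 1 + x) * (x + 1)"
  have "- 2 * of_nat m - 2 * of_nat k + x \<noteq> 0"
  proof
    assume "- 2 * of_nat m - 2 * of_nat k + x = 0"
    then have "x = of_nat (2 * m + 2 * k)"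
      by (simp add: algebra_simps)
    with assms(1) show False
      unfolding x_def by (simp only: of_nat_eq_iff)
  qed
  moreover have "2 * \<beta> + 2 * of_nat m + 2 * of_nat k + 1 + x \<noteq> 0"
    unfolding x_def using assms(2) by (rule add_of_nat_neq_0_if_notin_nonpos_ints_c)
  moreover have "x + 1 \<noteq> 0"
    unfolding x_def by (metis of_nat_Suc of_nat_eq_0_iff nat.distinct(1) add.commute)
  ultimately have "den \<noteq> 0"
    unfolding den_def by simp
  moreover have "whipple_term \<beta> m k (Suc n) = whipple_term \<beta> m k n * num / den"
    unfolding whipple_term_def num_def den_def x_def by (rule hyp3F2_term_Suc)
  ultimately have "whipple_term \<beta> m k (Suc n) * den = whipple_term \<beta> m k n * num"
    by simp
  then show ?thesis
    unfolding num_def den_def x_def by algebra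
qed

definition whipple_cert :: "complex \<Rightarrow> nat \<Rightarrow> nat \<Rightarrow> nat \<Rightarrow> complex" where
  "whipple_cert \<beta> m k n = (4 * of_nat m + 3) * whipple_term \<beta> (Suc m) k n * of_nat n
     * (of_nat n - 2 * of_nat m - 2 * of_nat k - 3) * (of_nat n + 2 * \<beta> + 2 * of_nat m + 2 * of_nat k + 2)
     / ((of_nat n + 2 * of_nat m + 1) * (of_nat n + 2 * of_nat m + 2))"

lemma whipple_cert_telescoping:
  assumes "n \<le> 2 * m + 2" and "k \<ge> 1"
    and "2 * \<beta> + 2 * of_nat (Suc m) + 2 * of_nat k + 1 \<notin> nonpos_ints_c"
  shows "(2 * of_nat k + 1) * (\<beta> + 2 * of_nat m + of_nat k + 2) * whipple_term \<beta> (Suc m) k n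
       - (2 * \<beta> + 2 * of_nat k + 1) * (2 * of_nat m + of_nat k + 2) * whipple_term \<beta> m (Suc k) n
     = whipple_cert \<beta> m k (Suc n) - whipple_cert \<beta> m k n"
proof -
  define x M K h where "x = (of_nat n :: complex)" and "M = (of_nat m :: complex)"
    and "K = (of_nat k :: complex)" and "h = whipple_term \<beta> (Suc m) k n"
  have "x + 2 * M + of_nat j + 1 = of_nat (Suc (n + 2 * m + j))" for j
    unfolding x_def M_def by simp
  then have "x + 2 * M + of_nat j + 1 \<noteq> 0" for j
    by (metis of_nat_neq_0)
  from this[of 0] this[of 1] this[of 2]
  have nz: "x + 2 * M + 1 \<noteq> 0" "x + 2 * M + 2 \<noteq> 0" "x + 2 * M + 3 \<noteq> 0"
    by (simp_all add: add.assoc)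
  have shifted: "whipple_term \<beta> m (Suc k) n
      = h * ((x - 2 * M - 1) * (x - 2 * M - 2)) / ((x + 2 * M + 1) * (x + 2 * M + 2))"
    using whipple_term_shift_m_k[of \<beta> m k n] nz(1,2) unfolding h_def x_def M_def by (simp add: eq_divide_eq)
  have "n \<noteq> 2 * Suc m + 2 * k"
    using assms(1,2) by simp
  note whipple_term_Suc [OF this assms(3)]
  then have term_Suc: "whipple_term \<beta> (Suc m) k (Suc n) * ((x - 2 * M - 2 * K - 2) * (x + 2 * \<beta> + 2 * M + 2 * K + 3) * (x + 1))
      = h * ((x - 2 * M - 2) * (x + 2 * M + 3) * (x + \<beta>))"
    unfolding h_def x_def M_def K_def of_nat_Suc by algebra
  have "whipple_cert \<beta> m k (Suc n) = (4 * M + 3)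
      * (whipple_term \<beta> (Suc m) k (Suc n) * ((x - 2 * M - 2 * K - 2) * (x + 2 * \<beta> + 2 * M + 2 * K + 3) * (x + 1)))
      / ((x + 2 * M + 2) * (x + 2 * M + 3))"
    unfolding whipple_cert_def x_def M_def K_def of_nat_Suc by (rule arg_cong2 [where f = "(/)"]) algebra+
  also have "\<dots> = (4 * M + 3) * (h * ((x - 2 * M - 2) * (x + 2 * M + 3) * (x + \<beta>))) / ((x + 2 * M + 2) * (x + 2 * M + 3))"
    unfolding term_Suc ..
  also have "\<dots> = (4 * M + 3) * h * (x - 2 * M - 2) * (x + \<beta>) * (x + 2 * M + 3) / ((x + 2 * M + 2) * (x + 2 * M + 3))"
    by (simp only: mult_ac)
  also have "\<dots> = (4 * M + 3) * h * (x - 2 * M - 2) * (x + \<beta>) / (x + 2 * M + 2)"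
    by (rule nonzero_mult_divide_mult_cancel_right [OF nz(3)])
  finally have cert_Suc: "whipple_cert \<beta> m k (Suc n) = (4 * M + 3) * h * (x - 2 * M - 2) * (x + \<beta>) / (x + 2 * M + 2)" .
  have cert: "whipple_cert \<beta> m k n = (4 * M + 3) * h * x * (x - 2 * M - 2 * K - 3) * (x + 2 * \<beta> + 2 * M + 2 * K + 2)
      / ((x + 2 * M + 1) * (x + 2 * M + 2))"
    unfolding whipple_cert_def x_def M_def K_def h_def ..
  show ?thesis
    unfolding shifted cert_Suc cert h_def [symmetric] M_def [symmetric] K_def [symmetric]
    using nz(1,2) by (simp add: divide_simps) algebra
qed

lemma whipple_sum_contiguous:
  assumes "k \<ge> 1" and "2 * \<beta> + 2 * of_nat (Suc m) + 2 * of_nat k + 1 \<notin> nonpos_ints_c"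
  shows "(2 * of_nat k + 1) * (\<beta> + 2 * of_nat m + of_nat k + 2) * (\<Sum>n\<le>2 * Suc m. whipple_term \<beta> (Suc m) k n)
       = (2 * \<beta> + 2 * of_nat k + 1) * (2 * of_nat m + of_nat k + 2) * (\<Sum>n\<le>2 * m. whipple_term \<beta> m (Suc k) n)"
proof -
  define A B where "A = (2 * of_nat k + 1) * (\<beta> + 2 * of_nat m + of_nat k + 2)"
    and "B = (2 * \<beta> + 2 * of_nat k + 1) * (2 * of_nat m + of_nat k + 2)"
  have "(\<Sum>n<2 * m + 3. A * whipple_term \<beta> (Suc m) k n - B * whipple_term \<beta> m (Suc k) n)
      = (\<Sum>n<2 * m + 3. whipple_cert \<beta> m k (Suc n) - whipple_cert \<beta> m k n)"
    unfolding A_def B_def by (rule sum.cong) (use whipple_cert_telescoping assms in auto)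
  also have "\<dots> = whipple_cert \<beta> m k (2 * m + 3) - whipple_cert \<beta> m k 0"
    by (rule sum_lessThan_telescope)
  also have "\<dots> = 0"
    by (simp add: whipple_cert_def whipple_term_eq_0)
  finally have "A * (\<Sum>n<2 * m + 3. whipple_term \<beta> (Suc m) k n) = B * (\<Sum>n<2 * m + 3. whipple_term \<beta> m (Suc k) n)"
    by (simp add: sum_subtractf sum_distrib_left)
  moreover have "(\<Sum>n<2 * m + 3. whipple_term \<beta> m (Suc k) n) = (\<Sum>n\<le>2 * m. whipple_term \<beta> m (Suc k) n)"
    by (rule sum.mono_neutral_right) (auto simp: whipple_term_eq_0)
  moreover have "{..<2 * m + 3} = {..2 * Suc m}"
    by auto
  ultimately show ?thesis
    unfolding A_def B_def by simp
qed

lemma whipple_closed_form_Suc: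
  "whipple_closed_form \<beta> (Suc m) k = whipple_closed_form \<beta> m (Suc k)
     * ((1 + 2 * \<beta> + 2 * of_nat k) * (2 + 2 * \<beta> + 2 * of_nat k) * (1 + of_nat k) * (2 + of_nat k + 2 * of_nat m))
     / ((1 + 2 * of_nat k) * (2 + 2 * of_nat k) * (1 + \<beta> + of_nat k) * (2 + \<beta> + of_nat k + 2 * of_nat m))"
proof -
  define K where "K = (of_nat k :: complex)"
  have "pochhammer (1 + 2 * \<beta> + 2 * K) (2 * Suc m)
      = (1 + 2 * \<beta> + 2 * K) * (2 + 2 * \<beta> + 2 * K) * pochhammer (1 + 2 * \<beta> + 2 * of_nat (Suc k)) (2 * m)"
    and "pochhammer (1 + 2 * K) (2 * Suc m)
      = (1 + 2 * K) * (2 + 2 * K) * pochhammer (1 + 2 * of_nat (Suc k)) (2 * m)"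
    using pochhammer_add_2[of "1 + 2 * \<beta> + 2 * K" "2 * m"] pochhammer_add_2[of "1 + 2 * K" "2 * m"]
    unfolding K_def by (simp_all add: algebra_simps)
  moreover have "pochhammer (1 + K) (2 * Suc m)
      = (1 + K) * pochhammer (1 + of_nat (Suc k)) (2 * m) * (2 + K + 2 * of_nat m)"
    and "pochhammer (1 + \<beta> + K) (2 * Suc m)
      = (1 + \<beta> + K) * pochhammer (1 + \<beta> + of_nat (Suc k)) (2 * m) * (2 + \<beta> + K + 2 * of_nat m)"
    using pochhammer_add_2'[of "1 + K" "2 * m"] pochhammer_add_2'[of "1 + \<beta> + K" "2 * m"]
    unfolding K_def by (simp_all add: algebra_simps)
  ultimately show ?thesis
    unfolding whipple_closed_form_def K_def [symmetric] by (simp add: divide_inverse mult_ac)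
qed

lemma whipple_closed_form_contiguous:
  assumes "\<beta> \<notin> nonpos_ints_c"
  shows "(2 * of_nat k + 1) * (\<beta> + 2 * of_nat m + of_nat k + 2) * whipple_closed_form \<beta> (Suc m) k
       = (2 * \<beta> + 2 * of_nat k + 1) * (2 * of_nat m + of_nat k + 2) * whipple_closed_form \<beta> m (Suc k)"
proof -
  define K M where "K = (of_nat k :: complex)" and "M = (of_nat m :: complex)"
  define num den where
    "num = (1 + 2 * \<beta> + 2 * K) * (2 + 2 * \<beta> + 2 * K) * (1 + K) * (2 + K + 2 * M)" and
    "den = (1 + 2 * K) * (2 + 2 * K) * (1 + \<beta> + K) * (2 + \<beta> + K + 2 * M)"
  have "1 + 2 * K = of_nat (Suc (2 * k))" and "2 + 2 * K = of_nat (Suc (Suc (2 * k)))"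
    unfolding K_def by simp_all
  moreover have "1 + \<beta> + K \<noteq> 0" and "2 + \<beta> + K + 2 * M \<noteq> 0"
    using add_of_nat_neq_0_if_notin_nonpos_ints_c[OF assms, of "k + 1"]
      add_of_nat_neq_0_if_notin_nonpos_ints_c[OF assms, of "k + 2 * m + 2"]
    unfolding K_def M_def by (simp_all add: algebra_simps)
  ultimately have "den \<noteq> 0"
    unfolding den_def by (metis mult_eq_0_iff of_nat_neq_0)
  have key: "(2 * K + 1) * (\<beta> + 2 * M + K + 2) * num = (2 * \<beta> + 2 * K + 1) * (2 * M + K + 2) * den"
    unfolding num_def den_def by algebra
  have "(2 * K + 1) * (\<beta> + 2 * M + K + 2) * whipple_closed_form \<beta> (Suc m) k
      = whipple_closed_form \<beta> m (Suc k) * ((2 * K + 1) * (\<beta> + 2 * M + K + 2) * num) / den"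
    unfolding whipple_closed_form_Suc num_def den_def K_def M_def by simp
  also have "\<dots> = (2 * \<beta> + 2 * K + 1) * (2 * M + K + 2) * whipple_closed_form \<beta> m (Suc k)"
    unfolding key using \<open>den \<noteq> 0\<close> by simp
  finally show ?thesis
    unfolding K_def M_def .
qed

lemma whipple_sum_eq_closed_form:
  assumes "k \<ge> 1" and "\<beta> \<notin> nonpos_ints_c"
    and "2 * \<beta> + 2 * of_nat m + 2 * of_nat k + 1 \<notin> nonpos_ints_c"
  shows "(\<Sum>n\<le>2 * m. whipple_term \<beta> m k n) = whipple_closed_form \<beta> m k"
  using assms(1,3)
proof (induction m arbitrary: k)
  case 0
  then show ?case
    by (simp add: whipple_term_def hyp3F2_term_def whipple_closed_form_def)
next
  case (Suc m)
  have "2 * \<beta> + 2 * of_nat m + 2 * of_nat (Suc k) + 1 = 2 * \<beta> + 2 * of_nat (Suc m) + 2 * of_nat k + 1"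
    by simp
  with Suc have IH: "(\<Sum>n\<le>2 * m. whipple_term \<beta> m (Suc k) n) = whipple_closed_form \<beta> m (Suc k)"
    by simp
  have "(2 * of_nat k + 1 :: complex) \<noteq> 0"
    by (metis of_nat_Suc of_nat_mult of_nat_numeral of_nat_neq_0 add.commute)
  moreover have "\<beta> + 2 * of_nat m + of_nat k + 2 \<noteq> 0"
    using add_of_nat_neq_0_if_notin_nonpos_ints_c[OF assms(2), of "2 * m + k + 2"] by (simp add: add_ac)
  moreover have "(2 * of_nat k + 1) * (\<beta> + 2 * of_nat m + of_nat k + 2) * (\<Sum>n\<le>2 * Suc m. whipple_term \<beta> (Suc m) k n)
      = (2 * of_nat k + 1) * (\<beta> + 2 * of_nat m + of_nat k + 2) * whipple_closed_form \<beta> (Suc m) k"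
    unfolding whipple_sum_contiguous [OF Suc.prems] IH whipple_closed_form_contiguous [OF assms(2)] ..
  ultimately show ?case
    by simp
qed

theorem mainTheorem6:
  fixes m k :: nat and \<beta> :: complex
  assumes "m \<ge> 1" and "k \<ge> 1"
    and "\<beta> \<notin> nonpos_ints_c"
    and "2*\<beta> + 2*of_nat m + 2*of_nat k + 1 \<notin> nonpos_ints_c"
  shows "hyp3F2_trunc (- 2*of_nat m) (1 + 2*of_nat m) \<beta>
           (- 2*of_nat m - 2*of_nat k) (2*\<beta> + 2*of_nat m + 2*of_nat k + 1) 1 (2*m)
       = pochhammer (1 + 2*\<beta> + 2*of_nat k) (2*m) * pochhammer (1 + of_nat k) (2*m)
         / (pochhammer (1 + 2*of_nat k) (2*m) * pochhammer (1 + \<beta> + of_nat k) (2*m))"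
  using whipple_sum_eq_closed_form [OF assms(2-4)]
  unfolding hyp3F2_trunc_1_eq_sum whipple_term_def whipple_closed_form_def .

end
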